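(* Let $k\ge1$ be an integer. Define \[ G_k=\bigcup_{n=0}^k T_a^{-n}(0)\cap\{x:\varkappa_a(x)\ge k\},\qquad D_k=\bigcup_{n=0}^{k-1}T_a^{-n}\Big(\frac{2a-1}{1-a}\Big)\cup\Big\{\frac1{1-a}\Big\}, \] and $g_k(x)=\max\{y\in G_k:y\le x\}$. (a) For any $a\in(\frac12,\frac23)$: the set $\{x:\varkappa_a(x)\ge k\}$ is a union of finitely many disjoint intervals $\{[g_k(y),y]:y\in D_k\}$; the set of left endpoints of these intervals is $G_k$; and on each of these intervals the functions $\delta_0(x),\dots,\delta_{k-1}(x)$ are constant and $T_a^1(x),\dots,T_a^k(x)$ are continuous and strictly increasing. (b) The assertions of (a) remain valid for $a=\frac23$ if the family of intervals is replaced by $\{[g_k(y-),y):y\in D_k,\,y\neq3\}\cup\{[g_k(3),3]\}$, where $g_k(y-)$ denotes the left limit of $g_k$ at $y$.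
   Context: For $a\in[\frac12,\frac23]$ let $I_a=\big(\frac{2a-1}{1-a},1\big)$ and define $T_a$ on $[0,\frac1{1-a}]\setminus I_a$ by $T_a(x)=\frac1a(x+1)$ for $0\le x\le\frac{2a-1}{1-a}$ and $T_a(x)=\frac1a(x-1)$ for $1\le x\le\frac1{1-a}$; for $a=\frac23$ set $T_{2/3}(1)=0$. For $x\in[0,\frac1{1-a}]$ let $\varkappa_a(x)=\inf\{k\ge0:T_a^k(x)\in I_a\}$ ($\inf\emptyset=\infty$), so $T_a^k(x)$ is defined iff $k\le\varkappa_a(x)$; $T_a^{-n}(z)$ denotes the set of $x$ with $\varkappa_a(x)\ge n$ and $T_a^n(x)=z$. For $0\le k\le\varkappa_a(x)$ put $\delta_k(x)=\mathbb 1\{T_a^k(x)<1\}$. *)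

theory Defs
  imports "HOL-Analysis.Analysis" "HOL-Library.Extended_Nat"
begin

definition Ia :: "real \<Rightarrow> real set" where
  "Ia a = {(2*a-1)/(1-a) <..< 1}"

definition Dom :: "real \<Rightarrow> real set" where
  "Dom a = {0 .. 1/(1-a)}"

text \<open>The map T_a, written as a total function. On [0,(2a-1)/(1-a)] (excluding x = 1,
  which only matters for a = 2/3) it is (x+1)/a, otherwise (x-1)/a; in particular
  T_{2/3}(1) = 0. Values on I_a or outside the domain are irrelevant (never used).\<close>
definition Ta :: "real \<Rightarrow> real \<Rightarrow> real" where
  "Ta a x = (if x < 1 \<and> x \<le> (2*a-1)/(1-a) then (x+1)/a else (x-1)/a)"

definition kappa :: "real \<Rightarrow> real \<Rightarrow> enat" where
  "kappa a x = (if \<exists>k. (Ta a ^^ k) x \<in> Ia a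
                then enat (LEAST k. (Ta a ^^ k) x \<in> Ia a) else \<infinity>)"

definition Tinv :: "real \<Rightarrow> nat \<Rightarrow> real \<Rightarrow> real set" where
  "Tinv a n z = {x \<in> Dom a. kappa a x \<ge> enat n \<and> (Ta a ^^ n) x = z}"

definition delta :: "real \<Rightarrow> nat \<Rightarrow> real \<Rightarrow> nat" where
  "delta a k x = (if (Ta a ^^ k) x < 1 then 1 else 0)"

definition Gk :: "real \<Rightarrow> nat \<Rightarrow> real set" where
  "Gk a k = (\<Union>n\<in>{0..k}. Tinv a n 0) \<inter> {x \<in> Dom a. kappa a x \<ge> enat k}"

definition Dk :: "real \<Rightarrow> nat \<Rightarrow> real set" where
  "Dk a k = (\<Union>n\<in>{0..<k}. Tinv a n ((2*a-1)/(1-a))) \<union> {1/(1-a)}"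

definition gk :: "real \<Rightarrow> nat \<Rightarrow> real \<Rightarrow> real" where
  "gk a k x = Max {y \<in> Gk a k. y \<le> x}"

end

theory Submission
  imports Defs
begin

text \<open>
  Write \<open>b = (2a-1)/(1-a)\<close> for the left end of the hole. If each iterate \<open>T\<^sup>i\<close>,
  \<open>i < k\<close>, uses a single branch on an interval \<open>J\<close>, then \<open>T\<^sup>k\<close> is affine and increasing
  on \<open>J\<close>; and \<open>T\<^sup>i\<close> can switch branch inside \<open>J\<close> only if the interval \<open>T\<^sup>i(J)\<close> reaches 1
  from below. For \<open>a < 2/3\<close> it would then cross the hole \<open>(b, 1)\<close>, so all branches are
  constant on every interval of survivors. A maximal interval of survivors ends at a point
  mapped onto \<open>b\<close> (whose orbit then stays at the fixed point \<open>1/(1-a)\<close>) or at \<open>1/(1-a)\<close>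
  itself, and it starts at the last point below it that is mapped onto \<open>0 = T 1\<close>.
  For \<open>a = 2/3\<close> the hole is empty, all of \<open>[0, 3]\<close> survives, and branches switch exactly
  at the preimages of 1. These are the points of \<open>G\<^sub>k\<close> other than 0, because the orbit of 0
  consists of odd multiples of \<open>2\<^sup>-\<^sup>n\<close> and never meets 1; so the half-open cells between
  consecutive points of \<open>G\<^sub>k\<close> are the required intervals.
\<close>

section \<open>Survivor sets and branches of the iterates\<close>

abbreviation hole_start :: "real \<Rightarrow> real" where
  "hole_start a \<equiv> (2*a-1)/(1-a)"

definition survivors :: "real \<Rightarrow> nat \<Rightarrow> real set" where
  "survivors a j = {x \<in> Dom a. \<forall>i<j. (Ta a ^^ i) x \<notin> Ia a}"

definition left_branch :: "real \<Rightarrow> real \<Rightarrow> bool" where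
  "left_branch a x \<longleftrightarrow> x < 1 \<and> x \<le> hole_start a"

lemma Ta_eq_if_left_branch: "Ta a x = (if left_branch a x then (x+1)/a else (x-1)/a)"
  by (simp add: Ta_def left_branch_def)

lemma left_branch_iff_less_one: "y \<notin> Ia a \<Longrightarrow> left_branch a y \<longleftrightarrow> y < 1"
  by (auto simp: left_branch_def Ia_def)

lemma kappa_ge_enat_iff: "kappa a x \<ge> enat j \<longleftrightarrow> (\<forall>i<j. (Ta a ^^ i) x \<notin> Ia a)"
proof (cases "\<exists>i. (Ta a ^^ i) x \<in> Ia a")
  case True
  let ?L = "LEAST i. (Ta a ^^ i) x \<in> Ia a"
  have "j \<le> ?L \<longleftrightarrow> (\<forall>i<j. (Ta a ^^ i) x \<notin> Ia a)"
  proof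
    assume "j \<le> ?L"
    then show "\<forall>i<j. (Ta a ^^ i) x \<notin> Ia a"
      using not_less_Least[where P = "\<lambda>i. (Ta a ^^ i) x \<in> Ia a"] by (meson less_le_trans)
  next
    assume "\<forall>i<j. (Ta a ^^ i) x \<notin> Ia a"
    then show "j \<le> ?L"
      using LeastI_ex[OF True] not_le by blast
  qed
  then show ?thesis
    using True by (simp add: kappa_def)
qed (simp add: kappa_def)

lemma survivors_eq_kappa_ge: "{x \<in> Dom a. kappa a x \<ge> enat k} = survivors a k"
  by (simp add: survivors_def kappa_ge_enat_iff)

lemma Tinv_eq_survivors: "Tinv a n z = {x \<in> survivors a n. (Ta a ^^ n) x = z}"
  by (auto simp: Tinv_def survivors_def kappa_ge_enat_iff)

lemma survivors_antimono: "i \<le> j \<Longrightarrow> survivors a j \<subseteq> survivors a i"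
  by (auto simp: survivors_def)

lemma survivors_Suc: "survivors a (Suc j) = {x \<in> survivors a j. (Ta a ^^ j) x \<notin> Ia a}"
  by (auto simp: survivors_def less_Suc_eq)

lemma survivors_subset_Dom: "survivors a j \<subseteq> Dom a"
  by (auto simp: survivors_def)

lemma survivors_bounds: "x \<in> survivors a j \<Longrightarrow> 0 \<le> x \<and> x \<le> 1/(1-a)"
  by (simp add: survivors_def Dom_def)

lemma Gk_eq_survivors: "Gk a k = {x \<in> survivors a k. \<exists>n\<le>k. (Ta a ^^ n) x = 0}"
  by (auto simp: Gk_def survivors_eq_kappa_ge Tinv_eq_survivors
      dest: survivors_antimono[THEN subsetD, rotated])

lemma Ta_in_Dom:
  assumes "1/2 \<le> a" "a \<le> 2/3" "x \<in> Dom a" "x \<notin> Ia a"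
  shows "Ta a x \<in> Dom a"
proof -
  have a: "0 < a" "0 < 1 - a" using assms(1,2) by auto
  show ?thesis
  proof (cases "left_branch a x")
    case True
    then have "x * (1-a) \<le> 2*a - 1" using a by (simp add: left_branch_def pos_le_divide_eq)
    then have "(x+1)/a \<le> 1/(1-a)" using a by (simp add: field_simps)
    then show ?thesis using True assms(3) a by (simp add: Ta_eq_if_left_branch Dom_def)
  next
    case False
    then have "1 \<le> x" using assms(4) by (auto simp: left_branch_iff_less_one)
    moreover have "x * (1-a) \<le> 1" using assms(3) a by (simp add: Dom_def pos_le_divide_eq mult.commute)
    then have "(x-1)/a \<le> 1/(1-a)" using a by (simp add: field_simps)
    ultimately show ?thesis using False a by (simp add: Ta_eq_if_left_branch Dom_def)
  qed
qed

lemma funpow_Ta_in_Dom: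
  assumes "1/2 \<le> a" "a \<le> 2/3" "x \<in> survivors a j" "i \<le> j"
  shows "(Ta a ^^ i) x \<in> Dom a"
  using assms(4)
proof (induction i)
  case (Suc i)
  then show ?case using assms Ta_in_Dom by (simp add: survivors_def)
qed (use assms(3) survivors_subset_Dom in auto)

lemma Ta_eq_zero_imp_eq_one:
  assumes "0 < a" "w \<in> Dom a" "w \<notin> Ia a" "Ta a w = 0"
  shows "w = 1"
  using assms by (auto simp: Ta_eq_if_left_branch Dom_def split: if_splits)

lemma finite_funpow_Ta_preimage:
  assumes "a \<noteq> 0"
  shows "finite {x. (Ta a ^^ n) x = z}"
proof (induction n)
  case (Suc n)
  let ?F = "{x. (Ta a ^^ n) x = z}"
  have "{x. (Ta a ^^ Suc n) x = z} \<subseteq> (\<lambda>w. a*w - 1) ` ?F \<union> (\<lambda>w. a*w + 1) ` ?F"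
  proof
    fix x assume "x \<in> {x. (Ta a ^^ Suc n) x = z}"
    then have "Ta a x \<in> ?F" by (simp add: funpow_Suc_right del: funpow.simps)
    moreover have "x = a * Ta a x - 1 \<or> x = a * Ta a x + 1"
      using assms by (simp add: Ta_eq_if_left_branch)
    ultimately show "x \<in> (\<lambda>w. a*w - 1) ` ?F \<union> (\<lambda>w. a*w + 1) ` ?F" by blast
  qed
  then show ?case using Suc by (meson finite_Un finite_imageI finite_subset)
qed simp

lemma finite_Dk: "a \<noteq> 0 \<Longrightarrow> finite (Dk a k)"
  by (rule finite_subset[of _ "(\<Union>n<k. {x. (Ta a ^^ n) x = hole_start a}) \<union> {1/(1-a)}"])
     (auto simp: Dk_def Tinv_def finite_funpow_Ta_preimage)

lemma finite_Gk: "a \<noteq> 0 \<Longrightarrow> finite (Gk a k)"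
  by (rule finite_subset[of _ "\<Union>n\<le>k. {x. (Ta a ^^ n) x = 0}"])
     (auto simp: Gk_def Tinv_def finite_funpow_Ta_preimage)

lemma Ta_right_end:
  assumes "0 < a" "a < 1"
  shows "Ta a (1/(1-a)) = 1/(1-a)"
  using assms by (simp add: Ta_eq_if_left_branch left_branch_def field_simps)

lemma funpow_fixed_point: "f z = z \<Longrightarrow> (f ^^ m) z = z"
  by (induction m) simp_all

lemma Ta_one: "Ta a 1 = 0"
  by (simp add: Ta_def)

definition branch_constant :: "real \<Rightarrow> nat \<Rightarrow> real set \<Rightarrow> bool" where
  "branch_constant a k J \<longleftrightarrow>
    (\<forall>i<k. \<forall>x\<in>J. \<forall>x'\<in>J. left_branch a ((Ta a ^^ i) x) = left_branch a ((Ta a ^^ i) x'))"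

lemma branch_constant_mono: "branch_constant a k J \<Longrightarrow> j \<le> k \<Longrightarrow> branch_constant a j J"
  unfolding branch_constant_def by (meson less_le_trans)

lemma funpow_Ta_affine_on:
  assumes "0 < a"
    and "branch_constant a j J"
  shows "\<exists>c>0. \<exists>d. \<forall>x\<in>J. (Ta a ^^ j) x = c*x + d"
  using assms(2)
proof (induction j)
  case 0
  show ?case by (rule exI[of _ 1]) simp
next
  case (Suc j)
  have "branch_constant a j J"
    using Suc.prems by (rule branch_constant_mono) simp
  then obtain c d where c: "c > 0" and cd: "\<forall>x\<in>J. (Ta a ^^ j) x = c*x + d"
    using Suc.IH by blast
  define s :: real where "s = (if \<exists>x0\<in>J. left_branch a ((Ta a ^^ j) x0) then 1 else -1)"
  have "(Ta a ^^ Suc j) x = (c/a)*x + (d+s)/a" if x: "x \<in> J" for x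
  proof -
    have "left_branch a ((Ta a ^^ j) x) \<longleftrightarrow> (\<exists>x0\<in>J. left_branch a ((Ta a ^^ j) x0))"
      using Suc.prems[unfolded branch_constant_def, rule_format, OF lessI x] x by blast
    then have "(Ta a ^^ Suc j) x = ((Ta a ^^ j) x + s)/a"
      by (simp add: s_def Ta_eq_if_left_branch)
    also have "\<dots> = (c/a)*x + (d+s)/a"
      using cd x by (simp add: add_divide_distrib)
    finally show ?thesis .
  qed
  then show ?case
    using c \<open>0 < a\<close> by (intro exI[of _ "c/a"]) auto
qed

lemma continuous_strict_mono_on_if_affine:
  fixes f :: "real \<Rightarrow> real"
  assumes "c > 0" "\<forall>x\<in>J. f x = c*x + d"
  shows "continuous_on J f \<and> strict_mono_on J f"
proof
  have "continuous_on J (\<lambda>x. c*x + d)"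
    by (intro continuous_intros)
  then show "continuous_on J f"
    using continuous_on_cong assms(2) by force
  show "strict_mono_on J f"
    using assms by (intro strict_mono_onI) simp
qed

lemma funpow_Ta_continuous_strict_mono_on:
  assumes "0 < a"
    and "branch_constant a j J"
  shows "continuous_on J (Ta a ^^ j) \<and> strict_mono_on J (Ta a ^^ j)"
  using funpow_Ta_affine_on[OF assms] continuous_strict_mono_on_if_affine by blast

lemma atLeastAtMost_subset_interval:
  fixes J :: "real set"
  assumes "is_interval J" "x \<in> J" "x' \<in> J"
  shows "{x..x'} \<subseteq> J"
  using mem_is_interval_1_I[OF assms] by auto

lemma below_one_constant_on_interval:
  fixes f :: "real \<Rightarrow> real"
  assumes J: "is_interval J" and f: "continuous_on J f" "strict_mono_on J f"
    and no_upcrossing: "\<And>x w. x \<in> J \<Longrightarrow> w \<in> J \<Longrightarrow> x < w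
      \<Longrightarrow> continuous_on {x..w} f \<Longrightarrow> f x < 1 \<Longrightarrow> f w \<noteq> 1"
    and x: "x \<in> J" "x' \<in> J"
  shows "f x < 1 \<longleftrightarrow> f x' < 1"
proof -
  have upward: "f x' < 1" if x: "x \<in> J" "x' \<in> J" "x < x'" and fx: "f x < 1" for x x'
  proof (rule ccontr)
    assume "\<not> f x' < 1"
    then have fx': "1 \<le> f x'" by simp
    have sub: "{x..x'} \<subseteq> J"
      using J x(1,2) by (rule atLeastAtMost_subset_interval)
    have "\<exists>w. x \<le> w \<and> w \<le> x' \<and> f w = 1"
      using fx fx' x(3) continuous_on_subset[OF f(1) sub] by (intro IVT') auto
    then obtain w where w: "x \<le> w" "w \<le> x'" "f w = 1" by blast
    have "x < w" using w fx by (cases "x = w") auto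
    moreover have "w \<in> J" "{x..w} \<subseteq> J" using sub w by auto
    ultimately have "f w \<noteq> 1"
      using no_upcrossing[OF x(1)] continuous_on_subset[OF f(1)] fx by blast
    then show False using w(3) by simp
  qed
  have same_side: "f x < 1 \<longleftrightarrow> f x' < 1" if x: "x \<in> J" "x' \<in> J" "x < x'" for x x'
  proof
    show "f x' < 1" if "f x < 1" using upward[OF x that] .
    show "f x < 1" if "f x' < 1" using strict_mono_onD[OF f(2) x] that by linarith
  qed
  show ?thesis
    using same_side[OF x] same_side[OF x(2,1)] linorder_neq_iff by blast
qed

text \<open>A change of branch of the increasing affine map \<open>T\<^sup>i\<close> on an interval means that its
  image crosses 1 from below; the hypothesis \<open>no_upcrossing\<close> excludes exactly this.\<close>
lemma branch_constant_on_interval: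
  assumes "0 < a" "is_interval J"
    and hole: "\<And>i x. i < k \<Longrightarrow> x \<in> J \<Longrightarrow> (Ta a ^^ i) x \<notin> Ia a"
    and no_upcrossing: "\<And>i x w. i < k \<Longrightarrow> x \<in> J \<Longrightarrow> w \<in> J \<Longrightarrow> x < w
      \<Longrightarrow> continuous_on {x..w} (Ta a ^^ i) \<Longrightarrow> (Ta a ^^ i) x < 1 \<Longrightarrow> (Ta a ^^ i) w \<noteq> 1"
  shows "branch_constant a k J"
  unfolding branch_constant_def
proof (intro allI impI)
  fix i assume "i < k"
  then show "\<forall>x\<in>J. \<forall>x'\<in>J. left_branch a ((Ta a ^^ i) x) = left_branch a ((Ta a ^^ i) x')"
  proof (induction i rule: less_induct)
    case (less i)
    have "branch_constant a i J"
      unfolding branch_constant_def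
    proof (intro allI impI)
      fix i' assume "i' < i"
      then show "\<forall>x\<in>J. \<forall>x'\<in>J. left_branch a ((Ta a ^^ i') x) = left_branch a ((Ta a ^^ i') x')"
        using less.prems by (intro less.IH) auto
    qed
    then have f: "continuous_on J (Ta a ^^ i)" "strict_mono_on J (Ta a ^^ i)"
      using funpow_Ta_continuous_strict_mono_on[OF \<open>0 < a\<close>] by blast+
    show ?case
    proof (intro ballI)
      fix x x' assume x: "x \<in> J" "x' \<in> J"
      have "(Ta a ^^ i) x < 1 \<longleftrightarrow> (Ta a ^^ i) x' < 1"
        using below_one_constant_on_interval[OF \<open>is_interval J\<close> f no_upcrossing[OF less.prems] x] .
      moreover have "(Ta a ^^ i) x \<notin> Ia a" "(Ta a ^^ i) x' \<notin> Ia a"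
        using hole[OF less.prems] x by auto
      ultimately show "left_branch a ((Ta a ^^ i) x) = left_branch a ((Ta a ^^ i) x')"
        by (simp add: left_branch_iff_less_one)
    qed
  qed
qed

lemma delta_constant_and_strict_mono_on:
  assumes "0 < a"
    and branch: "branch_constant a k J"
    and hole: "\<And>i x. i < k \<Longrightarrow> x \<in> J \<Longrightarrow> (Ta a ^^ i) x \<notin> Ia a"
  shows "(\<forall>j<k. \<forall>x\<in>J. \<forall>x'\<in>J. delta a j x = delta a j x')
    \<and> (\<forall>j\<in>{1..k}. continuous_on J (Ta a ^^ j) \<and> strict_mono_on J (Ta a ^^ j))"
proof
  show "\<forall>j<k. \<forall>x\<in>J. \<forall>x'\<in>J. delta a j x = delta a j x'"
  proof (intro allI impI ballI)
    fix j x x' assume j: "j < k" and x: "x \<in> J" "x' \<in> J"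
    have "left_branch a ((Ta a ^^ j) x) = left_branch a ((Ta a ^^ j) x')"
      using branch j x unfolding branch_constant_def by blast
    moreover have "(Ta a ^^ j) x \<notin> Ia a" "(Ta a ^^ j) x' \<notin> Ia a"
      using hole[OF j] x by auto
    ultimately show "delta a j x = delta a j x'"
      by (simp add: delta_def left_branch_iff_less_one)
  qed
  show "\<forall>j\<in>{1..k}. continuous_on J (Ta a ^^ j) \<and> strict_mono_on J (Ta a ^^ j)"
  proof
    fix j :: nat assume "j \<in> {1..k}"
    have "branch_constant a j J"
      using branch by (rule branch_constant_mono) (use \<open>j \<in> {1..k}\<close> in simp)
    then show "continuous_on J (Ta a ^^ j) \<and> strict_mono_on J (Ta a ^^ j)"
      by (rule funpow_Ta_continuous_strict_mono_on[OF assms(1)])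
  qed
qed

lemma mem_Ia_iff: "y \<in> Ia a \<longleftrightarrow> hole_start a < y \<and> y < 1"
  by (simp add: Ia_def)

section \<open>The case \<open>1/2 < a < 2/3\<close>\<close>

lemma right_end_notin_Ia: "0 < a \<Longrightarrow> a < 1 \<Longrightarrow> 1/(1-a) \<notin> Ia a"
  by (simp add: mem_Ia_iff field_simps)

locale nonempty_hole =
  fixes a :: real
  assumes a_bounds: "1/2 < a" "a < 2/3"
begin

lemma a_pos: "0 < a"
  using a_bounds by simp

lemma hole_start_bounds: "0 < hole_start a" "hole_start a < 1"
  using a_bounds by (simp_all add: divide_less_eq)

lemma survivor_interval_branch_constant:
  assumes J: "is_interval J" "J \<subseteq> survivors a k"
  shows "branch_constant a k J"
proof (rule branch_constant_on_interval)
  show "0 < a" by (rule a_pos)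
  show "is_interval J" by fact
  show hole: "(Ta a ^^ i) x \<notin> Ia a" if "i < k" "x \<in> J" for i x
    using J(2) that by (auto simp: survivors_def)
  show "(Ta a ^^ i) w \<noteq> 1"
    if i: "i < k" and x: "x \<in> J" "w \<in> J" "x < w"
      and cont: "continuous_on {x..w} (Ta a ^^ i)" and fx: "(Ta a ^^ i) x < 1" for i x w
  proof
    \<comment> \<open>otherwise \<open>T\<^sup>i\<close> takes the value in the middle of the hole somewhere between \<open>x\<close> and \<open>w\<close>\<close>
    assume fw: "(Ta a ^^ i) w = 1"
    let ?t = "(hole_start a + 1)/2"
    have "(Ta a ^^ i) x \<le> hole_start a"
      using hole[OF i x(1)] fx by (auto simp: mem_Ia_iff)
    then have "\<exists>z. x \<le> z \<and> z \<le> w \<and> (Ta a ^^ i) z = ?t"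
      using hole_start_bounds x(3) fw by (intro IVT' cont) auto
    then obtain z where z: "x \<le> z" "z \<le> w" "(Ta a ^^ i) z = ?t" by blast
    have "z \<in> J"
      using atLeastAtMost_subset_interval[OF J(1) x(1,2)] z by auto
    moreover have "?t \<in> Ia a"
    proof -
      have mid: "t < (t + 1)/2 \<and> (t + 1)/2 < 1" if "t < 1" for t :: real
        using that by auto
      show ?thesis
        unfolding mem_Ia_iff using hole_start_bounds(2) by (rule mid)
    qed
    ultimately show False
      using hole[OF i] z(3) by metis
  qed
qed

lemma survivor_interval_same_side:
  assumes "is_interval J" "J \<subseteq> survivors a k" "i < k" "x \<in> J" "x' \<in> J"
  shows "(Ta a ^^ i) x < 1 \<longleftrightarrow> (Ta a ^^ i) x' < 1"
proof -
  have "(Ta a ^^ i) x \<notin> Ia a" "(Ta a ^^ i) x' \<notin> Ia a"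
    using assms(2-5) by (auto simp: survivors_def)
  moreover have "left_branch a ((Ta a ^^ i) x) = left_branch a ((Ta a ^^ i) x')"
    using survivor_interval_branch_constant[OF assms(1,2)] assms(3-5)
    unfolding branch_constant_def by blast
  ultimately show ?thesis
    by (simp add: left_branch_iff_less_one)
qed

lemma survivor_interval_continuous_strict_mono:
  assumes "is_interval J" "J \<subseteq> survivors a k" "j \<le> k"
  shows "continuous_on J (Ta a ^^ j) \<and> strict_mono_on J (Ta a ^^ j)"
proof (rule funpow_Ta_continuous_strict_mono_on)
  show "0 < a" by (rule a_pos)
  show "branch_constant a j J"
    using survivor_interval_branch_constant[OF assms(1,2)] assms(3) by (rule branch_constant_mono)
qed

lemma Dk_notin_survivor_interval:
  assumes uv: "{u..v} \<subseteq> survivors a k" and x: "x \<in> {u..<v}"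
  shows "x \<notin> Dk a k"
proof
  assume "x \<in> Dk a k"
  have x': "x \<in> {u..v}" "v \<in> {u..v}" and "x < v" using x by auto
  then have v: "v \<in> survivors a k" using uv by blast
  then have "x \<noteq> 1/(1-a)" using survivors_bounds \<open>x < v\<close> by fastforce
  then obtain n where n: "n < k" and "x \<in> Tinv a n (hole_start a)"
    using \<open>x \<in> Dk a k\<close> by (auto simp: Dk_def)
  then have xn: "(Ta a ^^ n) x = hole_start a" by (simp add: Tinv_def)
  have "strict_mono_on {u..v} (Ta a ^^ n)"
    using survivor_interval_continuous_strict_mono[OF is_interval_cc uv] n by simp
  then have "(Ta a ^^ n) x < (Ta a ^^ n) v"
    using x' \<open>x < v\<close> by (rule strict_mono_onD)
  then have "hole_start a < (Ta a ^^ n) v"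
    using xn by simp
  moreover have "(Ta a ^^ n) v < 1"
    using survivor_interval_same_side[OF is_interval_cc uv n x'] xn hole_start_bounds by simp
  ultimately have "(Ta a ^^ n) v \<in> Ia a" by (simp only: mem_Ia_iff)
  then show False using v n by (simp add: survivors_def)
qed

lemma Gk_notin_survivor_interval:
  assumes uv: "{u..v} \<subseteq> survivors a k" and x: "x \<in> {u<..v}"
  shows "x \<notin> Gk a k"
proof
  assume "x \<in> Gk a k"
  then obtain n where n: "n \<le> k" "(Ta a ^^ n) x = 0"
    by (auto simp: Gk_eq_survivors)
  have x': "u \<in> {u..v}" "x \<in> {u..v}" and "u < x" using x by auto
  then have xS: "x \<in> survivors a k" and "u \<in> survivors a k" using uv by blast+
  then have "0 \<le> u" using survivors_bounds by blast
  then have "n \<noteq> 0" using n(2) \<open>u < x\<close> by (cases n) auto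
  then obtain m where m: "n = Suc m" using not0_implies_Suc by blast
  then have "m < k" using n by simp
  have "(Ta a ^^ m) x \<in> Dom a"
    using funpow_Ta_in_Dom[OF _ _ xS] \<open>m < k\<close> a_bounds by simp
  moreover have "(Ta a ^^ m) x \<notin> Ia a"
    using xS \<open>m < k\<close> by (simp add: survivors_def)
  moreover have "Ta a ((Ta a ^^ m) x) = 0"
    using n(2) m by simp
  ultimately have xm: "(Ta a ^^ m) x = 1"
    using a_pos by (intro Ta_eq_zero_imp_eq_one[of a]) simp_all
  have "strict_mono_on {u..v} (Ta a ^^ m)"
    using survivor_interval_continuous_strict_mono[OF is_interval_cc uv] \<open>m < k\<close> by simp
  then have "(Ta a ^^ m) u < (Ta a ^^ m) x"
    using x' \<open>u < x\<close> by (rule strict_mono_onD)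
  then show False
    using survivor_interval_same_side[OF is_interval_cc uv \<open>m < k\<close> x'] xm by simp
qed

lemma interval_subset_survivors_Suc:
  assumes IH: "{u..v} \<subseteq> survivors a j" and "j < k" and u: "u \<in> survivors a k"
    and no_Dk: "\<forall>x\<in>{u..<v}. x \<notin> Dk a k"
  shows "{u..v} \<subseteq> survivors a (Suc j)"
proof -
  have f: "continuous_on {u..v} (Ta a ^^ j)" "strict_mono_on {u..v} (Ta a ^^ j)"
    using survivor_interval_continuous_strict_mono[OF is_interval_cc IH] by simp_all
  have "(Ta a ^^ j) x \<notin> Ia a" if x: "x \<in> {u..v}" for x
  proof
    assume "(Ta a ^^ j) x \<in> Ia a"
    then have fx: "hole_start a < (Ta a ^^ j) x" "(Ta a ^^ j) x < 1" by (simp_all add: mem_Ia_iff)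
    have "(Ta a ^^ j) u \<le> (Ta a ^^ j) x"
      using strict_mono_on_leD[OF f(2) _ x] x by simp
    moreover have "(Ta a ^^ j) u \<notin> Ia a"
      using u \<open>j < k\<close> by (simp add: survivors_def)
    ultimately have "(Ta a ^^ j) u \<le> hole_start a"
      using fx by (auto simp: mem_Ia_iff)
    then have "\<exists>w. u \<le> w \<and> w \<le> x \<and> (Ta a ^^ j) w = hole_start a"
      using fx x continuous_on_subset[OF f(1)] by (intro IVT') auto
    then obtain w where w: "u \<le> w" "w \<le> x" "(Ta a ^^ j) w = hole_start a" by blast
    then have "w \<noteq> x" using fx by auto
    then have "w \<in> {u..<v}" using w x by auto
    moreover have "w \<in> Tinv a j (hole_start a)"
      using IH w x by (auto simp: Tinv_eq_survivors)
    then have "w \<in> Dk a k"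
      using \<open>j < k\<close> by (auto simp: Dk_def)
    ultimately show False using no_Dk by blast
  qed
  then show ?thesis
    using IH by (auto simp: survivors_Suc)
qed

lemma interval_subset_survivors:
  assumes uv: "u \<in> survivors a k" "v \<in> survivors a k"
    and no_Dk: "\<forall>x\<in>{u..<v}. x \<notin> Dk a k"
  shows "{u..v} \<subseteq> survivors a k"
proof -
  have "{u..v} \<subseteq> survivors a j" if "j \<le> k" for j
    using that
  proof (induction j)
    case 0
    then show ?case
      using survivors_bounds[OF uv(1)] survivors_bounds[OF uv(2)] by (auto simp: survivors_def Dom_def)
  next
    case (Suc j)
    then show ?case
      using interval_subset_survivors_Suc[OF _ _ uv(1) no_Dk] by simp
  qed
  then show ?thesis by simp
qed

lemma survivor_interval_Suc:
  assumes gx: "{g..x} \<subseteq> survivors a j" "g \<le> x" and x: "x \<in> survivors a (Suc j)"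
  shows "{g..x} \<subseteq> survivors a (Suc j)
    \<or> (\<exists>w\<in>{g..x}. (Ta a ^^ Suc j) w = 0 \<and> {w..x} \<subseteq> survivors a (Suc j))"
proof -
  have xI: "(Ta a ^^ j) x \<notin> Ia a"
    using x by (simp add: survivors_Suc)
  have f: "continuous_on {g..x} (Ta a ^^ j)" "strict_mono_on {g..x} (Ta a ^^ j)"
    using survivor_interval_continuous_strict_mono[OF is_interval_cc gx(1)] by simp_all
  have mono: "(Ta a ^^ j) y \<le> (Ta a ^^ j) y'" if "y \<in> {g..x}" "y' \<in> {g..x}" "y \<le> y'" for y y'
    using strict_mono_on_leD[OF f(2)] that by blast
  have extend: "{w..x} \<subseteq> survivors a (Suc j)"
    if "g \<le> w" and avoid: "\<And>y. y \<in> {w..x} \<Longrightarrow> (Ta a ^^ j) y \<notin> Ia a" for w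
    using gx that by (auto simp: survivors_Suc)
  show ?thesis
  proof (cases "(Ta a ^^ j) x \<le> hole_start a \<or> 1 \<le> (Ta a ^^ j) g")
    case True
    have "(Ta a ^^ j) y \<notin> Ia a" if "y \<in> {g..x}" for y
      using True mono[of y x] mono[of g y] that gx(2) by (auto simp: mem_Ia_iff)
    then show ?thesis
      using extend[of g] by simp
  next
    case False
    then have "(Ta a ^^ j) g < 1" "1 \<le> (Ta a ^^ j) x"
      using xI by (auto simp: mem_Ia_iff)
    then have "\<exists>w. g \<le> w \<and> w \<le> x \<and> (Ta a ^^ j) w = 1"
      using gx(2) f(1) by (intro IVT') auto
    then obtain w where w: "g \<le> w" "w \<le> x" "(Ta a ^^ j) w = 1" by blast
    have "(Ta a ^^ j) y \<notin> Ia a" if "y \<in> {w..x}" for y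
      using mono[of w y] that w by (auto simp: mem_Ia_iff)
    then have "{w..x} \<subseteq> survivors a (Suc j)"
      using extend w(1) by blast
    moreover have "(Ta a ^^ Suc j) w = 0"
      using w(3) by (simp add: Ta_one)
    ultimately show ?thesis
      using w(1,2) by auto
  qed
qed

lemma zero_preimage_below_survivor:
  assumes x: "x \<in> survivors a j"
  shows "\<exists>g n. n \<le> j \<and> (Ta a ^^ n) g = 0 \<and> g \<le> x \<and> {g..x} \<subseteq> survivors a j"
  using x
proof (induction j)
  case 0
  have "0 \<le> x" "x \<le> 1/(1-a)"
    using survivors_bounds[OF "0.prems"] by simp_all
  then have "{0..x} \<subseteq> survivors a 0"
    by (auto simp: survivors_def Dom_def)
  then show ?case
    using \<open>0 \<le> x\<close> by (intro exI[of _ 0]) auto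
next
  case (Suc j)
  have "x \<in> survivors a j"
    using Suc.prems by (simp add: survivors_Suc)
  then obtain g n where g: "n \<le> j" "(Ta a ^^ n) g = 0" "g \<le> x" and gx: "{g..x} \<subseteq> survivors a j"
    using Suc.IH by blast
  from survivor_interval_Suc[OF gx g(3) Suc.prems] show ?case
  proof
    assume "{g..x} \<subseteq> survivors a (Suc j)"
    then show ?case using g by (intro exI[of _ g] exI[of _ n]) auto
  next
    assume "\<exists>w\<in>{g..x}. (Ta a ^^ Suc j) w = 0 \<and> {w..x} \<subseteq> survivors a (Suc j)"
    then obtain w where "w \<le> x" "(Ta a ^^ Suc j) w = 0" "{w..x} \<subseteq> survivors a (Suc j)" by auto
    then show ?case by (intro exI[of _ w] exI[of _ "Suc j"]) auto
  qed
qed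

lemma Ta_hole_start: "Ta a (hole_start a) = 1/(1-a)"
proof -
  have "left_branch a (hole_start a)"
    using hole_start_bounds by (simp add: left_branch_def)
  moreover have "(hole_start a + 1)/a = 1/(1-a)"
    using a_bounds by (simp add: field_simps)
  ultimately show ?thesis by (simp add: Ta_eq_if_left_branch)
qed

lemma Dk_subset_survivors: "Dk a k \<subseteq> survivors a k"
proof
  fix y assume "y \<in> Dk a k"
  have a01: "0 < a" "a < 1" using a_bounds by auto
  have right_end: "(Ta a ^^ m) (1/(1-a)) = 1/(1-a)" for m
    using funpow_fixed_point Ta_right_end[OF a01] by metis
  consider "y = 1/(1-a)" | n where "n < k" "y \<in> survivors a n" "(Ta a ^^ n) y = hole_start a"
    using \<open>y \<in> Dk a k\<close> by (auto simp: Dk_def Tinv_eq_survivors)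
  then show "y \<in> survivors a k"
  proof cases
    case 1
    then show ?thesis
      using a01 right_end right_end_notin_Ia[OF a01] by (simp add: survivors_def Dom_def)
  next
    case 2
    have "(Ta a ^^ i) y \<notin> Ia a" for i
    proof (cases "i \<le> n")
      case True
      then consider "i < n" | "i = n" by linarith
      then show ?thesis
        using 2 hole_start_bounds by cases (auto simp: survivors_def mem_Ia_iff)
    next
      case False
      then obtain m where i: "i = Suc m + n"
        using less_imp_Suc_add[of n i] by auto
      have "(Ta a ^^ i) y = (Ta a ^^ m) (Ta a ((Ta a ^^ n) y))"
        unfolding i funpow_add funpow_Suc_right by simp
      also have "\<dots> = 1/(1-a)"
        using 2 Ta_hole_start right_end by simp
      finally show ?thesis using right_end_notin_Ia[OF a01] by simp
    qed
    then show ?thesis using 2 by (simp add: survivors_def)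
  qed
qed

lemma gk_eqI:
  assumes g: "g \<in> Gk a k" "g \<le> y" and gy: "{g..y} \<subseteq> survivors a k"
  shows "gk a k y = g"
  unfolding gk_def
proof (rule Max_eqI)
  show "finite {z \<in> Gk a k. z \<le> y}"
    using finite_Gk[of a k] a_pos by simp
  show "g \<in> {z \<in> Gk a k. z \<le> y}"
    using g by simp
  show "z \<le> g" if "z \<in> {z \<in> Gk a k. z \<le> y}" for z
    using that Gk_notin_survivor_interval[OF gy, of z] by fastforce
qed

lemma gk_interval:
  assumes y: "y \<in> survivors a k"
  shows "gk a k y \<in> Gk a k" "gk a k y \<le> y" "{gk a k y..y} \<subseteq> survivors a k"
proof -
  obtain g n where g: "n \<le> k" "(Ta a ^^ n) g = 0" "g \<le> y" and gy: "{g..y} \<subseteq> survivors a k"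
    using zero_preimage_below_survivor[OF y] by blast
  then have "g \<in> Gk a k"
    by (auto simp: Gk_eq_survivors)
  moreover have "gk a k y = g"
    using gk_eqI[OF \<open>g \<in> Gk a k\<close> g(3) gy] .
  ultimately show "gk a k y \<in> Gk a k" "gk a k y \<le> y" "{gk a k y..y} \<subseteq> survivors a k"
    using g(3) gy by simp_all
qed

lemma Dk_interval_subset_survivors:
  assumes "y \<in> Dk a k"
  shows "{gk a k y..y} \<subseteq> survivors a k"
  using gk_interval(3) Dk_subset_survivors assms by blast

lemma survivors_subset_gk_intervals:
  assumes x: "x \<in> survivors a k"
  shows "\<exists>y\<in>Dk a k. x \<in> {gk a k y..y}"
proof -
  let ?R = "{d \<in> Dk a k. x \<le> d}"
  have fin: "finite ?R" using finite_Dk[of a k] a_pos by simp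
  have "1/(1-a) \<in> ?R"
    using survivors_bounds[OF x] by (simp add: Dk_def)
  then have ne: "?R \<noteq> {}" by blast
  define y where "y = Min ?R"
  have y: "y \<in> ?R" unfolding y_def using fin ne by (rule Min_in)
  have y_min: "y \<le> d" if "d \<in> ?R" for d unfolding y_def using fin that by (rule Min_le)
  have "y \<in> survivors a k" using y Dk_subset_survivors by blast
  moreover have "\<forall>z\<in>{x..<y}. z \<notin> Dk a k" using y_min by force
  ultimately have xy: "{x..y} \<subseteq> survivors a k"
    using interval_subset_survivors[OF x] by blast
  obtain g n where g: "n \<le> k" "(Ta a ^^ n) g = 0" "g \<le> x" and gx: "{g..x} \<subseteq> survivors a k"
    using zero_preimage_below_survivor[OF x] by blast
  then have "g \<in> Gk a k"
    by (auto simp: Gk_eq_survivors)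
  moreover have "{g..y} \<subseteq> {g..x} \<union> {x..y}" by auto
  then have "{g..y} \<subseteq> survivors a k"
    using xy gx by blast
  ultimately have "gk a k y = g"
    using gk_eqI g(3) y by force
  then show ?thesis using y g(3) by auto
qed

lemma gk_intervals_disjoint:
  assumes y: "y \<in> Dk a k" "y' \<in> Dk a k" "y \<noteq> y'"
  shows "{gk a k y..y} \<inter> {gk a k y'..y'} = {}"
proof -
  have "{gk a k y..y} \<inter> {gk a k y'..y'} = {}"
    if yy: "y \<in> Dk a k" "y' \<in> Dk a k" "y < y'" for y y'
  proof (rule ccontr)
    assume "{gk a k y..y} \<inter> {gk a k y'..y'} \<noteq> {}"
    then have "y \<in> {gk a k y'..<y'}" using yy(3) by auto
    moreover have "{gk a k y'..y'} \<subseteq> survivors a k"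
      using Dk_interval_subset_survivors[OF yy(2)] .
    ultimately show False
      using Dk_notin_survivor_interval yy(1) by blast
  qed
  then show ?thesis
    using y by (metis inf_commute linorder_neqE)
qed

lemma gk_image_Dk: "gk a k ` Dk a k = Gk a k"
proof
  show "gk a k ` Dk a k \<subseteq> Gk a k"
    using gk_interval(1) Dk_subset_survivors by blast
  show "Gk a k \<subseteq> gk a k ` Dk a k"
  proof
    fix g assume g: "g \<in> Gk a k"
    then have "g \<in> survivors a k" by (simp add: Gk_eq_survivors)
    then obtain y where y: "y \<in> Dk a k" "g \<in> {gk a k y..y}"
      using survivors_subset_gk_intervals by blast
    have "{gk a k y..y} \<subseteq> survivors a k"
      using Dk_interval_subset_survivors[OF y(1)] .
    then have "g \<notin> {gk a k y<..y}"
      using Gk_notin_survivor_interval g by blast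
    then have "gk a k y = g"
      using y(2) by auto
    then show "g \<in> gk a k ` Dk a k" using y(1) by blast
  qed
qed

lemma gk_intervals_regular:
  "\<forall>y\<in>Dk a k.
      (\<forall>j<k. \<forall>x\<in>{gk a k y .. y}. \<forall>x'\<in>{gk a k y .. y}. delta a j x = delta a j x')
    \<and> (\<forall>j\<in>{1..k}. continuous_on {gk a k y .. y} (Ta a ^^ j)
                     \<and> strict_mono_on {gk a k y .. y} (Ta a ^^ j))"
proof (intro ballI, rule delta_constant_and_strict_mono_on)
  show "0 < a" for y by (rule a_pos)
  show "branch_constant a k {gk a k y..y}" if "y \<in> Dk a k" for y
    using survivor_interval_branch_constant[OF is_interval_cc Dk_interval_subset_survivors[OF that]] .
  show "(Ta a ^^ i) x \<notin> Ia a" if "y \<in> Dk a k" "i < k" "x \<in> {gk a k y..y}" for y i x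
    using Dk_interval_subset_survivors[OF that(1)] that(2,3) by (auto simp: survivors_def)
qed

lemma survivor_intervals:
  "finite (Dk a k)
     \<and> {x \<in> Dom a. kappa a x \<ge> enat k} = (\<Union>y\<in>Dk a k. {gk a k y .. y})
     \<and> (\<forall>y\<in>Dk a k. \<forall>y'\<in>Dk a k. y \<noteq> y' \<longrightarrow> {gk a k y .. y} \<inter> {gk a k y' .. y'} = {})
     \<and> gk a k ` Dk a k = Gk a k
     \<and> (\<forall>y\<in>Dk a k.
          (\<forall>j<k. \<forall>x\<in>{gk a k y .. y}. \<forall>x'\<in>{gk a k y .. y}. delta a j x = delta a j x')
        \<and> (\<forall>j\<in>{1..k}. continuous_on {gk a k y .. y} (Ta a ^^ j)
                       \<and> strict_mono_on {gk a k y .. y} (Ta a ^^ j)))"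
proof -
  have fin: "finite (Dk a k)"
    using a_pos by (simp add: finite_Dk)
  have cover: "{x \<in> Dom a. kappa a x \<ge> enat k} = (\<Union>y\<in>Dk a k. {gk a k y .. y})"
    unfolding survivors_eq_kappa_ge
  proof
    show "survivors a k \<subseteq> (\<Union>y\<in>Dk a k. {gk a k y .. y})"
      using survivors_subset_gk_intervals by blast
    show "(\<Union>y\<in>Dk a k. {gk a k y .. y}) \<subseteq> survivors a k"
      by (rule UN_least) (rule Dk_interval_subset_survivors)
  qed
  have disjoint: "\<forall>y\<in>Dk a k. \<forall>y'\<in>Dk a k. y \<noteq> y' \<longrightarrow> {gk a k y .. y} \<inter> {gk a k y' .. y'} = {}"
    using gk_intervals_disjoint by blast
  show ?thesis
    by (intro conjI fin cover disjoint gk_image_Dk gk_intervals_regular)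
qed
end

section \<open>Half-open cells between the points of a finite set\<close>

definition floor_in :: "real set \<Rightarrow> real \<Rightarrow> real" where
  "floor_in P x = Max {p \<in> P. p \<le> x}"

definition prev_in :: "real set \<Rightarrow> real \<Rightarrow> real" where
  "prev_in P y = Max {p \<in> P. p < y}"

text \<open>With \<open>P = G\<^sub>k\<close> and \<open>M = 3\<close> the cells are the intervals \<open>[g\<^sub>k(y-), y)\<close> and \<open>[g\<^sub>k(3), 3]\<close>
  of part (b), as \<open>g\<^sub>k = floor_in G\<^sub>k\<close>.\<close>
definition cell :: "real set \<Rightarrow> real \<Rightarrow> real \<Rightarrow> real set" where
  "cell P M y = (if y = M then {floor_in P M..M} else {Lim (at_left y) (floor_in P)..<y})"

lemma gk_eq_floor_in: "gk a k = floor_in (Gk a k)"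
  by (rule ext) (simp add: gk_def floor_in_def)

locale partition_points =
  fixes P :: "real set" and m M :: real
  assumes finite_points: "finite P" and bottom: "m \<in> P" and points_below: "P \<subseteq> {m..<M}"
begin

lemma prev_in_mem:
  assumes "y \<in> P - {m}"
  shows "prev_in P y \<in> P" "prev_in P y < y"
proof -
  have "m \<in> {p \<in> P. p < y}" using assms bottom points_below by force
  then have "prev_in P y \<in> {p \<in> P. p < y}"
    unfolding prev_in_def using finite_points by (intro Max_in) auto
  then show "prev_in P y \<in> P" "prev_in P y < y" by auto
qed

lemma prev_in_ge: "p \<in> P \<Longrightarrow> p < y \<Longrightarrow> p \<le> prev_in P y"
  unfolding prev_in_def using finite_points by (intro Max_ge) auto

lemma Max_points: "Max P \<in> P" "p \<in> P \<Longrightarrow> p \<le> Max P"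
  using finite_points bottom by (auto intro: Max_in)

lemma floor_in_right_end: "floor_in P M = Max P"
proof -
  have "{p \<in> P. p \<le> M} = P" using points_below by auto
  then show ?thesis by (simp add: floor_in_def)
qed

lemma Lim_at_left_floor_in:
  assumes y: "y \<in> P - {m}"
  shows "Lim (at_left y) (floor_in P) = prev_in P y"
proof (rule tendsto_Lim)
  have "floor_in P x = prev_in P y" if x: "x \<in> {prev_in P y<..<y}" for x
  proof -
    have "{p \<in> P. p \<le> x} = {p \<in> P. p < y}"
      using x prev_in_ge[of _ y] by force
    then show ?thesis by (simp add: floor_in_def prev_in_def)
  qed
  moreover have "eventually (\<lambda>x. x \<in> {prev_in P y<..<y}) (at_left y)"
    using eventually_at_left_real prev_in_mem(2)[OF y] by blast
  ultimately have "eventually (\<lambda>x. floor_in P x = prev_in P y) (at_left y)"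
    by (auto elim: eventually_mono)
  then show "(floor_in P \<longlongrightarrow> prev_in P y) (at_left y)"
    by (rule tendsto_eventually)
qed simp

lemma cell_cases:
  assumes "y \<in> (P - {m}) \<union> {M}"
  shows "cell P M y = (if y = M then {Max P..M} else {prev_in P y..<y})"
  using assms Lim_at_left_floor_in by (auto simp: cell_def floor_in_right_end)

lemma next_point:
  assumes "m \<le> x" "x < Max P"
  obtains y where "y \<in> P - {m}" "prev_in P y \<le> x" "x < y"
proof -
  let ?Q = "{p \<in> P. x < p}"
  have Q: "finite ?Q" "?Q \<noteq> {}" using finite_points Max_points assms(2) by auto
  define y where "y = Min ?Q"
  have y: "y \<in> P" "x < y" using Min_in[OF Q] by (auto simp: y_def)
  moreover have "prev_in P y \<le> x"
  proof (rule ccontr)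
    assume "\<not> prev_in P y \<le> x"
    then have "y \<le> prev_in P y"
      using prev_in_mem[of y] y assms(1) Q(1) by (auto simp: y_def)
    then show False
      using prev_in_mem(2)[of y] y assms(1) by auto
  qed
  ultimately show ?thesis
    using that assms(1) by auto
qed

lemma cell_subset:
  assumes "y \<in> (P - {m}) \<union> {M}"
  shows "cell P M y \<subseteq> {m..M}"
proof (cases "y = M")
  case True
  then show ?thesis using assms Max_points(1) points_below by (auto simp: cell_cases)
next
  case False
  then have "y \<in> P - {m}" using assms by simp
  then show ?thesis
    using assms False prev_in_mem[of y] points_below by (fastforce simp: cell_cases)
qed

lemma cells_cover: "(\<Union>y\<in>(P - {m}) \<union> {M}. cell P M y) = {m..M}"
proof
  show "(\<Union>y\<in>(P - {m}) \<union> {M}. cell P M y) \<subseteq> {m..M}"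
    using cell_subset by blast
  show "{m..M} \<subseteq> (\<Union>y\<in>(P - {m}) \<union> {M}. cell P M y)"
  proof
    fix x assume x: "x \<in> {m..M}"
    show "x \<in> (\<Union>y\<in>(P - {m}) \<union> {M}. cell P M y)"
    proof (cases "Max P \<le> x")
      case True
      then have "x \<in> cell P M M" using x by (simp add: cell_cases)
      then show ?thesis by blast
    next
      case False
      then have "m \<le> x" "x < Max P" using x by auto
      then obtain y where y: "y \<in> P - {m}" "prev_in P y \<le> x" "x < y"
        by (rule next_point)
      then have "x \<in> cell P M y" using points_below by (auto simp: cell_cases)
      then show ?thesis using y(1) by blast
    qed
  qed
qed

lemma cells_disjoint:
  assumes y: "y \<in> (P - {m}) \<union> {M}" "y' \<in> (P - {m}) \<union> {M}" "y \<noteq> y'"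
  shows "cell P M y \<inter> cell P M y' = {}"
proof -
  have "cell P M y \<inter> cell P M y' = {}"
    if yy: "y \<in> (P - {m}) \<union> {M}" "y' \<in> (P - {m}) \<union> {M}" "y < y'" for y y'
  proof -
    have "y \<in> P" "y \<noteq> M" using yy points_below by auto
    then have "cell P M y \<subseteq> {..<y}" using yy(1) by (auto simp: cell_cases)
    moreover have "y \<le> z" if "z \<in> cell P M y'" for z
    proof (cases "y' = M")
      case True
      then show ?thesis
        using that yy(2) Max_points(2)[OF \<open>y \<in> P\<close>] by (auto simp: cell_cases)
    next
      case False
      then show ?thesis
        using that yy(2) prev_in_ge[OF \<open>y \<in> P\<close> yy(3)] by (auto simp: cell_cases)
    qed
    ultimately show ?thesis by fastforce
  qed
  then show ?thesis
    using y by (metis inf_commute linorder_neqE)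
qed

lemma prev_in_image: "prev_in P ` (P - {m}) \<union> {Max P} = P"
proof
  show "prev_in P ` (P - {m}) \<union> {Max P} \<subseteq> P"
    using prev_in_mem(1) Max_points(1) by blast
  show "P \<subseteq> prev_in P ` (P - {m}) \<union> {Max P}"
  proof
    fix p assume p: "p \<in> P"
    show "p \<in> prev_in P ` (P - {m}) \<union> {Max P}"
    proof (cases "p = Max P")
      case False
      then have "m \<le> p" "p < Max P" using p points_below Max_points(2) by force+
      then obtain y where y: "y \<in> P - {m}" "prev_in P y \<le> p" "p < y"
        by (rule next_point)
      then have "prev_in P y = p" using prev_in_ge[OF p] by force
      then show ?thesis using y(1) by blast
    qed simp
  qed
qed

lemma cells_left_ends: "(\<lambda>y. Lim (at_left y) (floor_in P)) ` (P - {m}) \<union> {floor_in P M} = P"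
proof -
  have "(\<lambda>y. Lim (at_left y) (floor_in P)) ` (P - {m}) = prev_in P ` (P - {m})"
    using Lim_at_left_floor_in by (rule image_cong[OF refl])
  then show ?thesis
    using prev_in_image by (simp add: floor_in_right_end)
qed

lemma cell_is_interval: "is_interval (cell P M y)"
  by (simp add: cell_def is_interval_cc is_interval_co)

lemma cell_no_inner_point:
  assumes "y \<in> (P - {m}) \<union> {M}" "x \<in> cell P M y" "w \<in> cell P M y" "x < w"
  shows "w \<notin> P"
proof (cases "y = M")
  case True
  then show ?thesis using assms Max_points(2) by (fastforce simp: cell_cases)
next
  case False
  then have "cell P M y = {prev_in P y..<y}"
    using assms(1) by (simp add: cell_cases)
  then show ?thesis
    using assms(2-4) prev_in_ge[of w y] by fastforce
qed

end

section \<open>The case \<open>a = 2/3\<close>\<close>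

lemma Ia_two_thirds: "Ia (2/3) = {}"
  by (simp add: Ia_def)

lemma survivors_two_thirds: "survivors (2/3) j = {0..3}"
  by (auto simp: survivors_def Ia_two_thirds Dom_def)

lemma funpow_Ta_two_thirds_zero_odd:
  "\<exists>N::int. odd N \<and> (Ta (2/3) ^^ Suc n) 0 = N / 2 ^ Suc n"
proof (induction n)
  case 0
  show ?case by (rule exI[of _ 3]) (simp add: Ta_def)
next
  case (Suc n)
  then obtain N :: int where N: "odd N" "(Ta (2/3) ^^ Suc n) 0 = N / 2 ^ Suc n" by blast
  define s :: int where "s = (if N / 2 ^ Suc n < 1 then 1 else -1)"
  have "(Ta (2/3) ^^ Suc (Suc n)) 0 = 3/2 * (N / 2 ^ Suc n + s)"
    using N(2) by (simp add: Ta_def s_def)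
  also have "\<dots> = of_int (3 * (N + s * 2 ^ Suc n)) / 2 ^ Suc (Suc n)"
    by (simp add: field_simps)
  finally show ?case
    using N(1) by (intro exI[of _ "3 * (N + s * 2 ^ Suc n)"]) (simp add: s_def)
qed

lemma funpow_Ta_two_thirds_zero_ne_one: "(Ta (2/3) ^^ n) 0 \<noteq> 1"
proof (cases n)
  case (Suc m)
  obtain N :: int where N: "odd N" "(Ta (2/3) ^^ Suc m) 0 = N / 2 ^ Suc m"
    using funpow_Ta_two_thirds_zero_odd by blast
  show ?thesis
  proof
    assume "(Ta (2/3) ^^ n) 0 = 1"
    then have "real_of_int N = 2 ^ Suc m" using N(2) Suc by simp
    then have "N = 2 ^ Suc m" by (metis of_int_eq_iff of_int_numeral of_int_power)
    then show False using N(1) by simp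
  qed
qed simp

lemma Gk_two_thirds: "Gk (2/3) k = {x \<in> {0..3}. \<exists>n\<le>k. (Ta (2/3) ^^ n) x = 0}"
  by (simp add: Gk_eq_survivors survivors_two_thirds)

lemma Gk_two_thirds_bounds: "0 \<in> Gk (2/3) k" "Gk (2/3) k \<subseteq> {0..<3}"
proof -
  have fixed: "(Ta (2/3) ^^ n) 3 = 3" for n
    by (rule funpow_fixed_point) (simp add: Ta_def)
  show "0 \<in> Gk (2/3) k"
    by (force simp: Gk_two_thirds)
  show "Gk (2/3) k \<subseteq> {0..<3}"
  proof
    fix x assume "x \<in> Gk (2/3) k"
    then obtain n where "x \<in> {0..3}" "(Ta (2/3) ^^ n) x = 0"
      by (auto simp: Gk_two_thirds)
    moreover from this(2) have "x \<noteq> 3" using fixed by auto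
    ultimately show "x \<in> {0..<3}" by simp
  qed
qed

lemma Dk_two_thirds: "Dk (2/3) k = (Gk (2/3) k - {0}) \<union> {3}"
proof
  show "Dk (2/3) k \<subseteq> (Gk (2/3) k - {0}) \<union> {3}"
  proof
    fix x assume "x \<in> Dk (2/3) k"
    then consider "x = 3" | n where "n < k" "x \<in> {0..3}" "(Ta (2/3) ^^ n) x = 1"
      by (auto simp: Dk_def Tinv_eq_survivors survivors_two_thirds)
    then show "x \<in> (Gk (2/3) k - {0}) \<union> {3}"
    proof cases
      case 2
      then have "(Ta (2/3) ^^ Suc n) x = 0" by (simp add: Ta_one)
      moreover have "Suc n \<le> k" using 2 by simp
      ultimately have "x \<in> Gk (2/3) k"
        using 2 unfolding Gk_two_thirds by blast
      moreover have "x \<noteq> 0"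
        using 2 funpow_Ta_two_thirds_zero_ne_one by auto
      ultimately show ?thesis by simp
    qed simp
  qed
  show "(Gk (2/3) k - {0}) \<union> {3} \<subseteq> Dk (2/3) k"
  proof
    fix x assume x: "x \<in> (Gk (2/3) k - {0}) \<union> {3}"
    show "x \<in> Dk (2/3) k"
    proof (cases "x = 3")
      case False
      then obtain n where n: "n \<le> k" "(Ta (2/3) ^^ n) x = 0" and x03: "x \<in> {0..3}" "x \<noteq> 0"
        using x by (auto simp: Gk_two_thirds)
      then obtain m where m: "n = Suc m" by (cases n) auto
      have "(Ta (2/3) ^^ m) x \<in> Dom (2/3)"
        using funpow_Ta_in_Dom[of "2/3" x m m] x03 by (simp add: survivors_two_thirds)
      then have "(Ta (2/3) ^^ m) x = 1"
        using n(2) m by (intro Ta_eq_zero_imp_eq_one[of "2/3"]) (simp_all add: Ia_two_thirds)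
      then have "x \<in> Tinv (2/3) m 1"
        using x03 by (simp add: Tinv_eq_survivors survivors_two_thirds)
      then show ?thesis
        using n(1) m by (auto simp: Dk_def)
    qed (simp add: Dk_def)
  qed
qed

lemma partition_points_Gk_two_thirds: "partition_points (Gk (2/3) k) 0 3"
  using finite_Gk[of "2/3" k] Gk_two_thirds_bounds by unfold_locales auto

lemma cell_two_thirds_branch_constant:
  assumes y: "y \<in> (Gk (2/3) k - {0}) \<union> {3}"
  shows "branch_constant (2/3) k (cell (Gk (2/3) k) 3 y)"
proof (rule branch_constant_on_interval)
  interpret partition_points "Gk (2/3) k" 0 3 by (rule partition_points_Gk_two_thirds)
  show "(0::real) < 2/3" by simp
  show "is_interval (cell (Gk (2/3) k) 3 y)" by (rule cell_is_interval)
  show "(Ta (2/3) ^^ i) x \<notin> Ia (2/3)" for i x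
    by (simp add: Ia_two_thirds)
  show "(Ta (2/3) ^^ i) w \<noteq> 1"
    if "i < k" "x \<in> cell (Gk (2/3) k) 3 y" "w \<in> cell (Gk (2/3) k) 3 y" "x < w" for i x w
  proof
    assume "(Ta (2/3) ^^ i) w = 1"
    then have "(Ta (2/3) ^^ Suc i) w = 0" by (simp add: Ta_one)
    moreover have "w \<in> {0..3}" using cell_subset[OF y] that(3) by blast
    moreover have "Suc i \<le> k" using that(1) by simp
    ultimately have "w \<in> Gk (2/3) k"
      unfolding Gk_two_thirds by blast
    then show False
      using cell_no_inner_point[OF y that(2-4)] by blast
  qed
qed

lemma cells_two_thirds_regular:
  "\<forall>y\<in>(Gk (2/3) k - {0}) \<union> {3}.
      (\<forall>j<k. \<forall>x\<in>cell (Gk (2/3) k) 3 y. \<forall>x'\<in>cell (Gk (2/3) k) 3 y. delta (2/3) j x = delta (2/3) j x')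
    \<and> (\<forall>j\<in>{1..k}. continuous_on (cell (Gk (2/3) k) 3 y) (Ta (2/3) ^^ j)
                     \<and> strict_mono_on (cell (Gk (2/3) k) 3 y) (Ta (2/3) ^^ j))"
proof (intro ballI, rule delta_constant_and_strict_mono_on)
  show "(0::real) < 2/3" for y by simp
  show "branch_constant (2/3) k (cell (Gk (2/3) k) 3 y)" if "y \<in> (Gk (2/3) k - {0}) \<union> {3}" for y
    using that by (rule cell_two_thirds_branch_constant)
  show "(Ta (2/3) ^^ i) x \<notin> Ia (2/3)" for y i x
    by (simp add: Ia_two_thirds)
qed

lemma survivor_cells_two_thirds:
  "let a = (2/3::real);
         J = (\<lambda>y. if y = 3 then {gk a k 3 .. 3} else {Lim (at_left y) (gk a k) ..< y})
     in finite (Dk a k)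
     \<and> {x \<in> Dom a. kappa a x \<ge> enat k} = (\<Union>y\<in>Dk a k. J y)
     \<and> (\<forall>y\<in>Dk a k. \<forall>y'\<in>Dk a k. y \<noteq> y' \<longrightarrow> J y \<inter> J y' = {})
     \<and> (\<lambda>y. Lim (at_left y) (gk a k)) ` (Dk a k - {3}) \<union> {gk a k 3} = Gk a k
     \<and> (\<forall>y\<in>Dk a k.
          (\<forall>j<k. \<forall>x\<in>J y. \<forall>x'\<in>J y. delta a j x = delta a j x')
        \<and> (\<forall>j\<in>{1..k}. continuous_on (J y) (Ta a ^^ j)
                       \<and> strict_mono_on (J y) (Ta a ^^ j)))"
proof -
  interpret partition_points "Gk (2/3) k" 0 3 by (rule partition_points_Gk_two_thirds)
  have Dk3: "Dk (2/3) k - {3} = Gk (2/3) k - {0}"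
    using Dk_two_thirds points_below by auto
  have "finite ((Gk (2/3) k - {0}) \<union> {3})"
    using finite_points by simp
  moreover have "{x \<in> Dom (2/3::real). kappa (2/3) x \<ge> enat k}
      = (\<Union>y\<in>(Gk (2/3) k - {0}) \<union> {3}. cell (Gk (2/3) k) 3 y)"
    unfolding cells_cover by (simp add: survivors_eq_kappa_ge survivors_two_thirds)
  moreover have "\<forall>y\<in>(Gk (2/3) k - {0}) \<union> {3}. \<forall>y'\<in>(Gk (2/3) k - {0}) \<union> {3}.
      y \<noteq> y' \<longrightarrow> cell (Gk (2/3) k) 3 y \<inter> cell (Gk (2/3) k) 3 y' = {}"
    using cells_disjoint by blast
  ultimately show ?thesis
    unfolding Let_def gk_eq_floor_in cell_def[symmetric] Dk3
    unfolding Dk_two_thirds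
    by (intro conjI cells_left_ends cells_two_thirds_regular)
qed

theorem lemma3p3:
  fixes k :: nat
  assumes "k \<ge> 1"
  shows
   "(\<forall>a::real. 1/2 < a \<and> a < 2/3 \<longrightarrow>
       finite (Dk a k)
     \<and> {x \<in> Dom a. kappa a x \<ge> enat k} = (\<Union>y\<in>Dk a k. {gk a k y .. y})
     \<and> (\<forall>y\<in>Dk a k. \<forall>y'\<in>Dk a k. y \<noteq> y' \<longrightarrow> {gk a k y .. y} \<inter> {gk a k y' .. y'} = {})
     \<and> gk a k ` Dk a k = Gk a k
     \<and> (\<forall>y\<in>Dk a k.
          (\<forall>j<k. \<forall>x\<in>{gk a k y .. y}. \<forall>x'\<in>{gk a k y .. y}. delta a j x = delta a j x')
        \<and> (\<forall>j\<in>{1..k}. continuous_on {gk a k y .. y} (Ta a ^^ j)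
                       \<and> strict_mono_on {gk a k y .. y} (Ta a ^^ j))))
  \<and> (let a = (2/3::real);
         J = (\<lambda>y. if y = 3 then {gk a k 3 .. 3} else {Lim (at_left y) (gk a k) ..< y})
     in finite (Dk a k)
     \<and> {x \<in> Dom a. kappa a x \<ge> enat k} = (\<Union>y\<in>Dk a k. J y)
     \<and> (\<forall>y\<in>Dk a k. \<forall>y'\<in>Dk a k. y \<noteq> y' \<longrightarrow> J y \<inter> J y' = {})
     \<and> (\<lambda>y. Lim (at_left y) (gk a k)) ` (Dk a k - {3}) \<union> {gk a k 3} = Gk a k
     \<and> (\<forall>y\<in>Dk a k.
          (\<forall>j<k. \<forall>x\<in>J y. \<forall>x'\<in>J y. delta a j x = delta a j x')
        \<and> (\<forall>j\<in>{1..k}. continuous_on (J y) (Ta a ^^ j)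
                       \<and> strict_mono_on (J y) (Ta a ^^ j))))"
  by (intro conjI[OF allI[OF impI] survivor_cells_two_thirds] nonempty_hole.survivor_intervals)
     (simp add: nonempty_hole_def)

end
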